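(* Let $a_1,a_2\in\Sigma$ with $a_1\neq a_2$, let $n_1\ge1$, $u\in\{a_1,a_2\}^+$ and $v\in(\Sigma\setminus\{a_1,a_2\})^+$, and let $w=a_1^{n_1}a_2uv$. Then there exists an element of $\mathtt{BR}(w)$ which is not rich.
   Context: $\Sigma$ is an alphabet; $X^+$ denotes the set of nonempty words over a set of letters $X$. For a word $w=w_1\cdots w_n$, $w^R=w_n\cdots w_1$; $w$ is a palindrome if $w=w^R$; a factor of $w$ is a word $u$ with $w=puq$. A word $w$ is rich if the number of distinct nonempty palindromic factors of $w$ equals $|w|$. The block reversal of a nonempty word $w$ is $\mathtt{BR}(w)=\{B_t\cdots B_1 : w=B_1\cdots B_t,\ t\ge1,\ \text{each } B_i \text{ nonempty}\}$. *)

theory Defs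
  imports Main
begin

definition factors :: "'a list \<Rightarrow> 'a list set" where
  "factors w = {u. \<exists>p q. w = p @ u @ q}"

definition is_palindrome :: "'a list \<Rightarrow> bool" where
  "is_palindrome w \<longleftrightarrow> w = rev w"

definition pal_factors :: "'a list \<Rightarrow> 'a list set" where
  "pal_factors w = {u \<in> factors w. u \<noteq> [] \<and> is_palindrome u}"

definition rich :: "'a list \<Rightarrow> bool" where
  "rich w \<longleftrightarrow> card (pal_factors w) = length w"

definition BR :: "'a list \<Rightarrow> 'a list set" where
  "BR w = {concat (rev Bs) | Bs. Bs \<noteq> [] \<and> concat Bs = w \<and> (\<forall>B\<in>set Bs. B \<noteq> [])}"

end

theory Submission
  imports Defs "HOL-Library.Sublist"
begin

text \<open>Each appended letter creates at most one new palindromic factor, namely the longest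
  palindromic suffix, since a shorter palindromic suffix is also a prefix of it and hence
  occurs earlier. So a word of length \<open>n\<close> has at most \<open>n\<close> palindromic factors, and a word is
  not rich as soon as some letter creates none. This happens at the first return of a letter
  \<open>d\<close> in a prefix \<open>d v s d\<close> where \<open>v\<close> and \<open>s\<close> are nonempty with disjoint letters: the only
  palindromic suffixes are \<open>d\<close> and possibly the whole prefix, which is not a palindrome.
  If \<open>u = u' a\<^sub>2\<close>, the block reversal of \<open>(a\<^sub>1\<^sup>n a\<^sub>2 u') (a\<^sub>2 v)\<close> starts with such a
  prefix for \<open>d = a\<^sub>2\<close>; if \<open>u = u' a\<^sub>1\<close>, so does that of \<open>(a\<^sub>1\<^sup>n) (a\<^sub>2 u') (a\<^sub>1 v)\<close> for \<open>d = a\<^sub>1\<close>.\<close>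

lemma factors_eq_sublist: "factors w = {u. sublist u w}"
  by (simp add: factors_def sublist_def)

lemma finite_pal_factors: "finite (pal_factors w)"
proof (rule finite_subset)
  show "pal_factors w \<subseteq> set (sublists w)"
    by (auto simp: pal_factors_def factors_eq_sublist)
qed simp

lemma pal_factors_Nil [simp]: "pal_factors [] = {}"
  by (auto simp: pal_factors_def factors_def)

lemma new_pal_factor_snoc_suffix:
  assumes "u \<in> pal_factors (w @ [c]) - pal_factors w"
  shows "suffix u (w @ [c])"
  using assms sublist_snoc[of u w c] by (auto simp: pal_factors_def factors_eq_sublist)

lemma palindrome_suffix_prefix:
  assumes "suffix u v" "is_palindrome u" "is_palindrome v"
  shows "prefix u v"
  using assms by (metis is_palindrome_def suffix_to_prefix)

lemma new_pal_factors_snoc_unique: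
  assumes new1: "u1 \<in> pal_factors (w @ [c]) - pal_factors w"
    and new2: "u2 \<in> pal_factors (w @ [c]) - pal_factors w"
    and "length u1 \<le> length u2"
  shows "u1 = u2"
proof (rule ccontr)
  assume "u1 \<noteq> u2"
  have suffix1: "suffix u1 (w @ [c])" and suffix2: "suffix u2 (w @ [c])"
    using new1 new2 by (blast intro: new_pal_factor_snoc_suffix)+
  have "suffix u1 u2"
    using suffix1 suffix2 \<open>length u1 \<le> length u2\<close> by (rule suffix_length_suffix)
  with new1 new2 have "prefix u1 u2"
    by (auto simp: pal_factors_def intro: palindrome_suffix_prefix)
  with \<open>u1 \<noteq> u2\<close> obtain m x where "u2 = u1 @ m @ [x]"
    by (metis prefix_def rev_exhaust self_append_conv)
  with suffix2 obtain p where "w = p @ u1 @ m"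
    by (auto simp: suffix_def)
  hence "u1 \<in> pal_factors w"
    using new1 by (auto simp: pal_factors_def factors_def)
  with new1 show False by simp
qed

lemma card_pal_factors_snoc_le: "card (pal_factors (w @ [c])) \<le> card (pal_factors w) + 1"
proof -
  let ?A = "pal_factors (w @ [c])" and ?B = "pal_factors w"
  have "card (?A - ?B) \<le> Suc 0"
    using finite_pal_factors new_pal_factors_snoc_unique[of _ w c]
    by (subst card_le_Suc0_iff_eq) (auto, metis nat_le_linear)
  moreover have "card ?A \<le> card ?B + card (?A - ?B)"
    by (rule order_trans[OF card_mono card_Un_le]) (auto simp: finite_pal_factors)
  ultimately show ?thesis by linarith
qed

lemma card_pal_factors_append_le:
  "card (pal_factors (y @ z)) \<le> card (pal_factors y) + length z"
proof (induction z rule: rev_induct)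
  case Nil
  then show ?case by simp
next
  case (snoc c z)
  have "card (pal_factors ((y @ z) @ [c])) \<le> card (pal_factors (y @ z)) + 1"
    by (rule card_pal_factors_snoc_le)
  with snoc.IH show ?case by simp
qed

lemma card_pal_factors_le_length: "card (pal_factors w) \<le> length w"
  using card_pal_factors_append_le[of "[]" w] by simp

lemma not_rich_if_no_new_pal_factor:
  assumes "pal_factors (y @ [c]) \<subseteq> pal_factors y"
  shows "\<not> rich (y @ c # z)"
proof -
  have "card (pal_factors ((y @ [c]) @ z)) \<le> card (pal_factors (y @ [c])) + length z"
    by (rule card_pal_factors_append_le)
  also have "\<dots> \<le> card (pal_factors y) + length z"
    using card_mono[OF finite_pal_factors assms] by simp
  also have "\<dots> < length (y @ c # z)"
    using card_pal_factors_le_length[of y] by simp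
  finally show ?thesis by (simp add: rich_def)
qed

lemma not_palindrome_disjoint_middle:
  assumes "v \<noteq> []" "s \<noteq> []" "set v \<inter> set s = {}"
  shows "\<not> is_palindrome (d # v @ s @ [d])"
proof
  assume "is_palindrome (d # v @ s @ [d])"
  hence "v @ s = rev s @ rev v" by (simp add: is_palindrome_def)
  hence "hd (v @ s) = hd (rev s @ rev v)" by (rule arg_cong)
  hence "hd v = last s"
    using assms(1,2) by (simp add: hd_rev)
  moreover have "hd v \<in> set v" "last s \<in> set s"
    using assms(1,2) by simp_all
  ultimately show False
    using assms(3) by (simp add: disjoint_iff)
qed

lemma no_new_pal_factor_at_return:
  assumes "d \<notin> set v" "d \<notin> set s" "v \<noteq> []" "s \<noteq> []" "set v \<inter> set s = {}"
  shows "pal_factors ((d # v @ s) @ [d]) \<subseteq> pal_factors (d # v @ s)"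
proof
  fix u
  assume u_pal: "u \<in> pal_factors ((d # v @ s) @ [d])"
  show "u \<in> pal_factors (d # v @ s)"
  proof (rule ccontr)
    assume new: "u \<notin> pal_factors (d # v @ s)"
    with u_pal obtain p where p: "d # v @ s @ [d] = p @ u"
      using new_pal_factor_snoc_suffix by (fastforce simp: suffix_def)
    have "u \<noteq> []" "rev u = u"
      using u_pal by (auto simp: pal_factors_def is_palindrome_def)
    have "last (p @ u) = d"
      unfolding p[symmetric] by simp
    with \<open>u \<noteq> []\<close> \<open>rev u = u\<close> have "hd u = d"
      by (metis hd_rev last_appendR)
    with \<open>u \<noteq> []\<close> obtain u' where "u = d # u'"
      by (metis list.collapse)
    have "[d] \<in> pal_factors (d # v @ s)"
      by (auto simp: pal_factors_def factors_def is_palindrome_def intro: exI[of _ "[]"])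
    with new \<open>u = d # u'\<close> have "u' \<noteq> []"
      by auto
    then obtain x y where u: "u = d # x @ [y]"
      using \<open>u = d # u'\<close> by (cases u' rule: rev_cases) auto
    have "u \<noteq> d # v @ s @ [d]"
      using u_pal not_palindrome_disjoint_middle[OF assms(3-5)]
      by (auto simp: pal_factors_def)
    with p obtain p' where "v @ s @ [d] = p' @ u"
      by (cases p) auto
    with u have "v @ s = p' @ d # x"
      by simp
    hence "d \<in> set (v @ s)"
      by (metis in_set_conv_decomp)
    with assms(1,2) show False
      by simp
  qed
qed

lemma not_rich_first_return:
  assumes "v \<noteq> []" "set v \<inter> set t = {}" "d \<in> set t" "hd t \<noteq> d"
  shows "\<not> rich (d # v @ t)"
proof -
  obtain s r where t: "t = s @ d # r" and "d \<notin> set s"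
    using split_list_first[OF assms(3)] by blast
  have "d \<notin> set v" "set v \<inter> set s = {}" "s \<noteq> []"
    using t assms(2-4) by auto
  hence "pal_factors ((d # v @ s) @ [d]) \<subseteq> pal_factors (d # v @ s)"
    using assms(1) \<open>d \<notin> set s\<close> by (intro no_new_pal_factor_at_return)
  hence "\<not> rich ((d # v @ s) @ d # r)"
    by (rule not_rich_if_no_new_pal_factor)
  with t show ?thesis by simp
qed

lemma concat_rev_in_BR:
  assumes "Bs \<noteq> []" "[] \<notin> set Bs"
  shows "concat (rev Bs) \<in> BR (concat Bs)"
  using assms unfolding BR_def by blast

theorem mainTheorem4:
  fixes a1 a2 :: 'a and n1 :: nat and u v :: "'a list"
  assumes "a1 \<noteq> a2"
    and "n1 \<ge> 1"
    and "u \<noteq> []" and "set u \<subseteq> {a1, a2}"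
    and "v \<noteq> []" and "set v \<inter> {a1, a2} = {}"
  shows "\<exists>x \<in> BR (replicate n1 a1 @ [a2] @ u @ v). \<not> rich x"
proof -
  let ?w = "replicate n1 a1 @ [a2] @ u @ v"
  obtain u' d where u: "u = u' @ [d]"
    using assms(3) by (cases u rule: rev_cases) auto
  have "set u' \<subseteq> {a1, a2}" "replicate n1 a1 \<noteq> []"
    using u assms(2,4) by auto
  consider (last_a2) "d = a2" | (last_a1) "d = a1"
    using u assms(4) by auto
  then show ?thesis
  proof cases
    case last_a2
    let ?Bs = "[replicate n1 a1 @ [a2] @ u', a2 # v]"
    have "concat (rev ?Bs) \<in> BR ?w"
      using concat_rev_in_BR[of ?Bs] u last_a2 by simp
    moreover have "\<not> rich (a2 # v @ replicate n1 a1 @ [a2] @ u')"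
      using assms \<open>set u' \<subseteq> _\<close> \<open>replicate n1 a1 \<noteq> []\<close>
      by (intro not_rich_first_return) auto
    ultimately show ?thesis by auto
  next
    case last_a1
    let ?Bs = "[replicate n1 a1, a2 # u', a1 # v]"
    have "concat (rev ?Bs) \<in> BR ?w"
      using concat_rev_in_BR[of ?Bs] u last_a1 \<open>replicate n1 a1 \<noteq> []\<close> by simp
    moreover have "\<not> rich (a1 # v @ a2 # u' @ replicate n1 a1)"
      using assms \<open>set u' \<subseteq> _\<close> \<open>replicate n1 a1 \<noteq> []\<close>
      by (intro not_rich_first_return) auto
    ultimately show ?thesis by auto
  qed
qed

end
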